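(* Consider the Probabilistic Serial mechanism with $n$ agents and $m \le n$ items. Agent 1 has a strict linear order $\succ_1$ over the items; let $\overline{O}$ be the set of its $k$ most preferred items under $\succ_1$ ($1 \le k \le m$). Fix arbitrary reported strict linear orders of agents $2,\dots,n$, and consider the truthful run in which agent 1 reports $\succ_1$. Let $T$ be the time at which the last item of $\overline{O}$ is exhausted in this run, and suppose $\tfrac12 \le T < \tfrac23$. Suppose there is an item $o^* \in \overline{O}$ of which agent 1 receives a positive amount such that, at the moment $o^*$ is exhausted, the agents eating $o^*$ are exactly agent 1 and one other agent (agent 2). Let $t_1$ be the time at which agent 1 starts eating $o^*$, let $t_2$ be the length of time agent 1 spends eating $o^*$ (so $o^*$ is exhausted at time $t_1+t_2$), and let $t_3 = T - t_1 - t_2$. Then $$t_1 + t_2 \ge \tfrac12,\quad t_3 < \tfrac16,\quad t_1 < \tfrac13,\quad t_2 > 2t_3.$$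
   Context: Probabilistic Serial: there are $n$ agents and $m$ divisible items of unit supply; each agent reports a strict linear order over all items. Starting at time $0$, every agent consumes at rate $1$ per unit time its most preferred item (according to its report) among those with positive remaining supply; when an item is exhausted, agents consuming it move to their most preferred item still available; this continues until all items are exhausted. *)

theory Defs
  imports Complex_Main
begin

text \<open>Agents are 0..<n (agent 0 plays the role of "agent 1" of the paper),
  items are 0..<m.  A report of agent i is a list P i enumerating all items
  from most to least preferred.  The run is computed event by event:
  a state is (current time, remaining supply of each item).\<close>

definition ps_top :: "nat list \<Rightarrow> nat set \<Rightarrow> nat" where
  "ps_top p A = hd (filter (\<lambda>j. j \<in> A) p)"

fun ps_state :: "nat \<Rightarrow> nat \<Rightarrow> (nat \<Rightarrow> nat list) \<Rightarrow> nat \<Rightarrow> real \<times> (nat \<Rightarrow> real)" where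
  "ps_state n m P 0 = (0, \<lambda>j. if j < m then 1 else 0)"
| "ps_state n m P (Suc k) =
     (let (t, s) = ps_state n m P k;
          A = {j. j < m \<and> 0 < s j};
          c = (\<lambda>j. card {i. i < n \<and> ps_top (P i) A = j});
          d = Min ((\<lambda>j. s j / real (c j)) ` {j \<in> A. 0 < c j})
      in if A = {} then (t, s)
         else (t + d, \<lambda>j. if j \<in> A then s j - real (c j) * d else s j))"

text \<open>Time at which event step k starts (t_0 = 0, t_1, ... are exhaustion times).\<close>
definition ps_time :: "nat \<Rightarrow> nat \<Rightarrow> (nat \<Rightarrow> nat list) \<Rightarrow> nat \<Rightarrow> real" where
  "ps_time n m P k = fst (ps_state n m P k)"

definition ps_supply :: "nat \<Rightarrow> nat \<Rightarrow> (nat \<Rightarrow> nat list) \<Rightarrow> nat \<Rightarrow> nat \<Rightarrow> real" where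
  "ps_supply n m P k j = snd (ps_state n m P k) j"

definition ps_avail :: "nat \<Rightarrow> nat \<Rightarrow> (nat \<Rightarrow> nat list) \<Rightarrow> nat \<Rightarrow> nat set" where
  "ps_avail n m P k = {j. j < m \<and> 0 < ps_supply n m P k j}"

text \<open>Item eaten by agent i during step k, i.e. on [ps_time k, ps_time (k+1)).\<close>
definition ps_eats :: "nat \<Rightarrow> nat \<Rightarrow> (nat \<Rightarrow> nat list) \<Rightarrow> nat \<Rightarrow> nat \<Rightarrow> nat" where
  "ps_eats n m P k i = ps_top (P i) (ps_avail n m P k)"

definition ps_exh_step :: "nat \<Rightarrow> nat \<Rightarrow> (nat \<Rightarrow> nat list) \<Rightarrow> nat \<Rightarrow> nat" where
  "ps_exh_step n m P j = (LEAST k. ps_supply n m P (Suc k) j \<le> 0)"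

definition ps_exh :: "nat \<Rightarrow> nat \<Rightarrow> (nat \<Rightarrow> nat list) \<Rightarrow> nat \<Rightarrow> real" where
  "ps_exh n m P j = ps_time n m P (Suc (ps_exh_step n m P j))"

text \<open>Amount of item j received by agent i (= total time agent i spends eating j);
  the run terminates after at most m steps.\<close>
definition ps_share :: "nat \<Rightarrow> nat \<Rightarrow> (nat \<Rightarrow> nat list) \<Rightarrow> nat \<Rightarrow> nat \<Rightarrow> real" where
  "ps_share n m P i j =
     (\<Sum>k<m. if ps_eats n m P k i = j then ps_time n m P (Suc k) - ps_time n m P k else 0)"

definition ps_start :: "nat \<Rightarrow> nat \<Rightarrow> (nat \<Rightarrow> nat list) \<Rightarrow> nat \<Rightarrow> nat \<Rightarrow> real" where
  "ps_start n m P i j = ps_time n m P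
      (LEAST k. ps_eats n m P k i = j \<and> ps_time n m P k < ps_time n m P (Suc k))"

end

theory Submission
  imports Defs
begin

text \<open>An agent that starts eating an item keeps eating it until the item is exhausted, so
  up to the exhaustion time X = t1 + t2 of o* only agents 1 and 2 ever eat o*, and its unit
  supply is split between them. Agent 1 eats o* throughout [t1, X], receiving t2 = X - t1,
  while agent 2 receives at most X. Hence 1 \<le> t2 + X; together with t1 \<ge> 0 and
  X \<le> T < 2/3 this yields all four inequalities by linear arithmetic.\<close>

lemma ps_top_in:
  assumes "A \<subseteq> set p" and "A \<noteq> {}"
  shows "ps_top p A \<in> A"
proof -
  have "filter (\<lambda>j. j \<in> A) p \<noteq> []"
    using assms by (auto simp: filter_empty_conv)
  then show ?thesis
    unfolding ps_top_def using hd_in_set by fastforce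
qed

lemma ps_top_subset: "ps_top p A = j \<Longrightarrow> j \<in> B \<Longrightarrow> B \<subseteq> A \<Longrightarrow> ps_top p B = j"
  unfolding ps_top_def by (induction p) auto

text \<open>The quantities c and d bound in the recursion of ps_state.\<close>

definition ps_num_eaters ::
    "nat \<Rightarrow> nat \<Rightarrow> (nat \<Rightarrow> nat list) \<Rightarrow> nat \<Rightarrow> nat \<Rightarrow> nat" where
  "ps_num_eaters n m P k j = card {i. i < n \<and> ps_eats n m P k i = j}"

definition ps_step_length :: "nat \<Rightarrow> nat \<Rightarrow> (nat \<Rightarrow> nat list) \<Rightarrow> nat \<Rightarrow> real" where
  "ps_step_length n m P k =
    Min ((\<lambda>j. ps_supply n m P k j / real (ps_num_eaters n m P k j)) `
      {j \<in> ps_avail n m P k. 0 < ps_num_eaters n m P k j})"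

lemma ps_state_Suc:
  "ps_state n m P (Suc k) =
    (if ps_avail n m P k = {} then ps_state n m P k
     else (ps_time n m P k + ps_step_length n m P k,
           \<lambda>j. if j \<in> ps_avail n m P k
               then ps_supply n m P k j - real (ps_num_eaters n m P k j) * ps_step_length n m P k
               else ps_supply n m P k j))"
proof -
  obtain t s where ts: "ps_state n m P k = (t, s)"
    by (cases "ps_state n m P k")
  then have "ps_time n m P k = t" "ps_supply n m P k = s"
    by (auto simp: ps_time_def ps_supply_def fun_eq_iff)
  moreover have "ps_avail n m P k = {j. j < m \<and> 0 < s j}"
    by (simp add: ps_avail_def \<open>ps_supply n m P k = s\<close>)
  ultimately show ?thesis
    by (simp only: ps_state.simps ts prod.case Let_def
        ps_step_length_def ps_num_eaters_def ps_eats_def)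
qed

lemma ps_time_0: "ps_time n m P 0 = 0"
  by (simp add: ps_time_def)

lemma ps_supply_0: "ps_supply n m P 0 j = (if j < m then 1 else 0)"
  by (simp add: ps_supply_def)

lemma ps_time_Suc:
  "ps_time n m P (Suc k) =
    (if ps_avail n m P k = {} then ps_time n m P k else ps_time n m P k + ps_step_length n m P k)"
  by (simp add: ps_state_Suc ps_time_def del: ps_state.simps)

lemma ps_supply_Suc:
  "ps_supply n m P (Suc k) j =
    (if j \<in> ps_avail n m P k
     then ps_supply n m P k j - real (ps_num_eaters n m P k j) * ps_step_length n m P k
     else ps_supply n m P k j)"
  by (subst ps_supply_def, subst ps_state_Suc) (auto simp: ps_supply_def)

lemma ps_avail_subset: "ps_avail n m P k \<subseteq> {..<m}"
  by (auto simp: ps_avail_def)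

lemma finite_ps_avail: "finite (ps_avail n m P k)"
  using finite_subset[OF ps_avail_subset] by blast

lemma ps_avail_Suc_subset: "ps_avail n m P (Suc k) \<subseteq> ps_avail n m P k"
  by (auto simp: ps_avail_def ps_supply_Suc split: if_splits)

lemma ps_avail_antimono: "k \<le> k' \<Longrightarrow> ps_avail n m P k' \<subseteq> ps_avail n m P k"
  using lift_Suc_antimono_le[of "ps_avail n m P", OF ps_avail_Suc_subset] by blast

lemma ps_avail_nonempty_if_time_less:
  "ps_time n m P k < ps_time n m P (Suc k) \<Longrightarrow> ps_avail n m P k \<noteq> {}"
  by (auto simp: ps_time_Suc)

locale ps_profile =
  fixes n m :: nat and P :: "nat \<Rightarrow> nat list"
  assumes agents_nonempty: "0 < n"
    and prefs_complete: "\<And>i. i < n \<Longrightarrow> set (P i) = {..<m}"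
begin

lemma ps_eats_in_avail:
  assumes "i < n" and "ps_avail n m P k \<noteq> {}"
  shows "ps_eats n m P k i \<in> ps_avail n m P k"
  unfolding ps_eats_def using assms ps_top_in ps_avail_subset prefs_complete by metis

lemma ps_num_eaters_pos_ex:
  assumes "ps_avail n m P k \<noteq> {}"
  shows "\<exists>j \<in> ps_avail n m P k. 0 < ps_num_eaters n m P k j"
proof -
  have "0 \<in> {i. i < n \<and> ps_eats n m P k i = ps_eats n m P k 0}"
    using agents_nonempty by simp
  then have "0 < ps_num_eaters n m P k (ps_eats n m P k 0)"
    unfolding ps_num_eaters_def by (subst card_gt_0_iff) auto
  then show ?thesis
    using ps_eats_in_avail[OF agents_nonempty assms] by blast
qed

lemma ps_step_length_le:
  "j \<in> ps_avail n m P k \<Longrightarrow> 0 < ps_num_eaters n m P k j \<Longrightarrow>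
    ps_step_length n m P k \<le> ps_supply n m P k j / real (ps_num_eaters n m P k j)"
  unfolding ps_step_length_def using finite_ps_avail by (intro Min_le) auto

lemma ps_step_length_attained:
  assumes "ps_avail n m P k \<noteq> {}"
  obtains j where "j \<in> ps_avail n m P k" and "0 < ps_num_eaters n m P k j"
    and "ps_step_length n m P k = ps_supply n m P k j / real (ps_num_eaters n m P k j)"
proof -
  have "ps_step_length n m P k \<in>
      (\<lambda>j. ps_supply n m P k j / real (ps_num_eaters n m P k j)) `
      {j \<in> ps_avail n m P k. 0 < ps_num_eaters n m P k j}"
    unfolding ps_step_length_def using finite_ps_avail ps_num_eaters_pos_ex[OF assms]
    by (intro Min_in) auto
  then show ?thesis
    using that by blast
qed

lemma ps_step_length_pos: "ps_avail n m P k \<noteq> {} \<Longrightarrow> 0 < ps_step_length n m P k"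
  by (erule ps_step_length_attained) (simp add: ps_avail_def)

lemma ps_supply_nonneg: "0 \<le> ps_supply n m P k j"
proof (induction k)
  case 0
  then show ?case by (simp add: ps_supply_0)
next
  case (Suc k)
  show ?case
  proof (cases "j \<in> ps_avail n m P k \<and> 0 < ps_num_eaters n m P k j")
    case True
    then have "ps_step_length n m P k * real (ps_num_eaters n m P k j) \<le> ps_supply n m P k j"
      using ps_step_length_le by (simp add: pos_le_divide_eq)
    then show ?thesis
      using True by (simp add: ps_supply_Suc mult.commute)
  next
    case False
    then show ?thesis
      using Suc by (auto simp: ps_supply_Suc)
  qed
qed

lemma ps_time_le_Suc: "ps_time n m P k \<le> ps_time n m P (Suc k)"
  using ps_step_length_pos by (simp add: ps_time_Suc less_imp_le)

lemma ps_time_nonneg: "0 \<le> ps_time n m P k"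
  by (induction k) (auto simp: ps_time_0 intro: order_trans[OF _ ps_time_le_Suc])

lemma ps_avail_Suc_psubset:
  assumes "ps_avail n m P k \<noteq> {}"
  shows "ps_avail n m P (Suc k) \<subset> ps_avail n m P k"
proof -
  obtain j where "j \<in> ps_avail n m P k" and "0 < ps_num_eaters n m P k j"
    and "ps_step_length n m P k = ps_supply n m P k j / real (ps_num_eaters n m P k j)"
    using ps_step_length_attained[OF assms] .
  then have "j \<notin> ps_avail n m P (Suc k)"
    by (simp add: ps_avail_def ps_supply_Suc)
  then show ?thesis
    using \<open>j \<in> ps_avail n m P k\<close> ps_avail_Suc_subset by blast
qed

lemma card_ps_avail_le: "card (ps_avail n m P k) \<le> m - k"
proof (induction k)
  case 0
  show ?case
    using card_mono[OF _ ps_avail_subset] by simp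
next
  case (Suc k)
  show ?case
  proof (cases "ps_avail n m P k = {}")
    case True
    then show ?thesis
      using ps_avail_Suc_subset[of n m P k] by auto
  next
    case False
    then have "card (ps_avail n m P (Suc k)) < card (ps_avail n m P k)"
      using ps_avail_Suc_psubset finite_ps_avail by (intro psubset_card_mono)
    then show ?thesis
      using Suc by linarith
  qed
qed

lemma ps_avail_m: "ps_avail n m P m = {}"
  using card_ps_avail_le[of m] finite_ps_avail by simp

lemma ps_supply_exh_step:
  assumes "j < m"
  shows "ps_exh_step n m P j < m" and "ps_supply n m P (Suc (ps_exh_step n m P j)) j = 0"
proof -
  let ?exhausted = "\<lambda>k. ps_supply n m P (Suc k) j \<le> 0"
  have "j \<notin> ps_avail n m P (Suc (m - 1))"
    using ps_avail_m assms by simp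
  then have "?exhausted (m - 1)"
    using assms by (simp add: ps_avail_def not_less)
  then show "ps_exh_step n m P j < m"
    "ps_supply n m P (Suc (ps_exh_step n m P j)) j = 0"
    unfolding ps_exh_step_def using assms Least_le[of ?exhausted] LeastI[of ?exhausted]
      ps_supply_nonneg[of "Suc (LEAST k. ?exhausted k)" j]
    by fastforce+
qed

lemma ps_mem_avail_iff:
  assumes "j < m"
  shows "j \<in> ps_avail n m P k \<longleftrightarrow> k \<le> ps_exh_step n m P j"
proof
  assume "j \<in> ps_avail n m P k"
  moreover have "j \<notin> ps_avail n m P (Suc (ps_exh_step n m P j))"
    using ps_supply_exh_step[OF assms] by (simp add: ps_avail_def)
  ultimately show "k \<le> ps_exh_step n m P j"
    using ps_avail_antimono[of "Suc (ps_exh_step n m P j)" k n m P]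
    by (meson in_mono not_less_eq_eq)
next
  assume "k \<le> ps_exh_step n m P j"
  then show "j \<in> ps_avail n m P k"
  proof (cases k)
    case 0
    then show ?thesis
      using assms by (simp add: ps_avail_def ps_supply_0)
  next
    case (Suc k')
    then have "\<not> ps_supply n m P (Suc k') j \<le> 0"
      using \<open>k \<le> ps_exh_step n m P j\<close> not_less_Least unfolding ps_exh_step_def
      by (metis Suc_le_lessD)
    then show ?thesis
      using assms Suc by (simp add: ps_avail_def)
  qed
qed

lemma ps_eats_persist:
  assumes "j < m" and "ps_eats n m P k i = j" and "k \<le> k'" and "k' \<le> ps_exh_step n m P j"
  shows "ps_eats n m P k' i = j"
  using assms ps_top_subset ps_avail_antimono[OF \<open>k \<le> k'\<close>] ps_mem_avail_iff
  unfolding ps_eats_def by metis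

lemma ps_supply_eq:
  assumes "j < m" and "K \<le> Suc (ps_exh_step n m P j)"
  shows "ps_supply n m P K j =
    1 - (\<Sum>k<K. real (ps_num_eaters n m P k j) * (ps_time n m P (Suc k) - ps_time n m P k))"
  using assms(2)
proof (induction K)
  case 0
  then show ?case
    using assms(1) by (simp add: ps_supply_0)
next
  case (Suc K)
  then have "j \<in> ps_avail n m P K"
    using ps_mem_avail_iff[OF assms(1)] by simp
  then show ?case
    using Suc by (auto simp: ps_supply_Suc ps_time_Suc)
qed

lemma ps_share_eq_sum_upto_exh:
  assumes "i < n" and "j < m"
  shows "ps_share n m P i j = (\<Sum>k<Suc (ps_exh_step n m P j).
    if ps_eats n m P k i = j then ps_time n m P (Suc k) - ps_time n m P k else 0)"
  unfolding ps_share_def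
proof (rule sum.mono_neutral_right)
  show "{..<Suc (ps_exh_step n m P j)} \<subseteq> {..<m}"
    using ps_supply_exh_step(1)[OF assms(2)] by auto
  show "\<forall>k\<in>{..<m} - {..<Suc (ps_exh_step n m P j)}. (if ps_eats n m P k i = j
      then ps_time n m P (Suc k) - ps_time n m P k else 0) = 0"
  proof
    fix k
    assume "k \<in> {..<m} - {..<Suc (ps_exh_step n m P j)}"
    then have "j \<notin> ps_avail n m P k"
      using ps_mem_avail_iff[OF assms(2)] by simp
    then show "(if ps_eats n m P k i = j
        then ps_time n m P (Suc k) - ps_time n m P k else 0) = 0"
      using ps_eats_in_avail[OF assms(1), of k] by (auto simp: ps_time_Suc)
  qed
qed simp

lemma ps_share_le_exh:
  assumes "i < n" and "j < m"
  shows "ps_share n m P i j \<le> ps_exh n m P j"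
proof -
  have "ps_share n m P i j
      \<le> (\<Sum>k<Suc (ps_exh_step n m P j). ps_time n m P (Suc k) - ps_time n m P k)"
    unfolding ps_share_eq_sum_upto_exh[OF assms] using ps_time_le_Suc by (intro sum_mono) auto
  then show ?thesis
    by (simp add: sum_lessThan_telescope ps_time_0 ps_exh_def)
qed

lemma ps_share_eq_exh_minus_start:
  assumes "i < n" and "j < m" and "0 < ps_share n m P i j"
  shows "ps_share n m P i j = ps_exh n m P j - ps_start n m P i j"
proof -
  define E where "E = ps_exh_step n m P j"
  let ?dt = "\<lambda>k. ps_time n m P (Suc k) - ps_time n m P k"
  let ?eating = "\<lambda>k. ps_eats n m P k i = j \<and> ps_time n m P k < ps_time n m P (Suc k)"
  have idle: "(if ps_eats n m P k i = j then ?dt k else 0) = 0" if "\<not> ?eating k" for k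
    using that ps_time_le_Suc[of k] by auto
  define L where "L = (LEAST k. ?eating k)"
  have "\<exists>k. ?eating k"
  proof (rule ccontr)
    assume "\<nexists>k. ?eating k"
    then have "ps_share n m P i j = 0"
      unfolding ps_share_def using idle by (intro sum.neutral) blast
    then show False
      using assms(3) by simp
  qed
  then have L: "?eating L"
    unfolding L_def by (rule LeastI_ex)
  then have "j \<in> ps_avail n m P L"
    using ps_eats_in_avail[OF assms(1)] ps_avail_nonempty_if_time_less by metis
  then have "L \<le> E"
    unfolding E_def using ps_mem_avail_iff[OF assms(2)] by simp
  have "ps_share n m P i j = (\<Sum>k<Suc E. if ps_eats n m P k i = j then ?dt k else 0)"
    unfolding E_def by (rule ps_share_eq_sum_upto_exh[OF assms(1,2)])
  also have "\<dots> = (\<Sum>k = L..E. ?dt k)"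
  proof (rule sum.mono_neutral_cong_right)
    show "\<forall>k\<in>{..<Suc E} - {L..E}. (if ps_eats n m P k i = j then ?dt k else 0) = 0"
    proof
      fix k
      assume "k \<in> {..<Suc E} - {L..E}"
      then have "\<not> ?eating k"
        using not_less_Least[of k ?eating] unfolding L_def by auto
      then show "(if ps_eats n m P k i = j then ?dt k else 0) = 0"
        by (rule idle)
    qed
    show "(if ps_eats n m P k i = j then ?dt k else 0) = ?dt k" if "k \<in> {L..E}" for k
      using that ps_eats_persist[OF assms(2)] L unfolding E_def by auto
  qed auto
  also have "\<dots> = ps_exh n m P j - ps_start n m P i j"
    using \<open>L \<le> E\<close> by (simp add: sum_Suc_diff ps_exh_def ps_start_def E_def L_def)
  finally show ?thesis .
qed

lemma ps_share_eq_0_if_not_final_eater: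
  assumes "i < n" and "j < m" and "ps_eats n m P (ps_exh_step n m P j) i \<noteq> j"
  shows "ps_share n m P i j = 0"
  unfolding ps_share_eq_sum_upto_exh[OF assms(1,2)]
proof (intro sum.neutral ballI)
  fix k
  assume "k \<in> {..<Suc (ps_exh_step n m P j)}"
  then have "ps_eats n m P k i \<noteq> j"
    using assms(3) ps_eats_persist[OF assms(2), of k i "ps_exh_step n m P j"] by auto
  then show "(if ps_eats n m P k i = j
      then ps_time n m P (Suc k) - ps_time n m P k else 0) = 0"
    by simp
qed

lemma ps_sum_share:
  assumes "j < m"
  shows "(\<Sum>i<n. ps_share n m P i j) = 1"
proof -
  define E where "E = ps_exh_step n m P j"
  have count: "(\<Sum>i<n. if ps_eats n m P k i = j then x else 0) =
      real (ps_num_eaters n m P k j) * x"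
    for k and x :: real
    by (simp add: ps_num_eaters_def sum.If_cases Int_def conj_commute)
  have "(\<Sum>i<n. ps_share n m P i j) = (\<Sum>i<n. \<Sum>k<Suc E.
      if ps_eats n m P k i = j then ps_time n m P (Suc k) - ps_time n m P k else 0)"
    unfolding E_def using ps_share_eq_sum_upto_exh[OF _ assms] by simp
  also have "\<dots> = (\<Sum>k<Suc E.
      real (ps_num_eaters n m P k j) * (ps_time n m P (Suc k) - ps_time n m P k))"
    by (subst sum.swap) (simp add: count)
  also have "\<dots> = 1 - ps_supply n m P (Suc E) j"
    unfolding E_def by (simp add: ps_supply_eq[OF assms])
  finally show ?thesis
    using ps_supply_exh_step(2)[OF assms] by (simp add: E_def)
qed

lemma ps_sum_share_final_eaters:
  assumes "j < m"
  shows "(\<Sum>i\<in>{i. i < n \<and> ps_eats n m P (ps_exh_step n m P j) i = j}.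
    ps_share n m P i j) = 1"
proof -
  have "(\<Sum>i<n. ps_share n m P i j) =
      (\<Sum>i\<in>{i. i < n \<and> ps_eats n m P (ps_exh_step n m P j) i = j}. ps_share n m P i j)"
    using ps_share_eq_0_if_not_final_eater[OF _ assms] by (intro sum.mono_neutral_right) auto
  then show ?thesis
    using ps_sum_share[OF assms] by simp
qed

end

theorem lemma3:
  fixes n m k :: nat and P :: "nat \<Rightarrow> nat list" and ostar a :: nat
    and Obar :: "nat set" and T t1 t2 t3 :: real
  assumes "m \<le> n" and "1 \<le> k" and "k \<le> m"
    and "\<forall>i<n. distinct (P i) \<and> set (P i) = {..<m}"
    and Obar_def: "Obar = set (take k (P 0))"
    and T_def: "T = Max (ps_exh n m P ` Obar)"
    and "1/2 \<le> T" and "T < 2/3"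
    and "ostar \<in> Obar" and "0 < ps_share n m P 0 ostar"
    and "a < n" and "a \<noteq> 0"
    and "{i. i < n \<and> ps_eats n m P (ps_exh_step n m P ostar) i = ostar} = {0, a}"
    and t1_def: "t1 = ps_start n m P 0 ostar"
    and t2_def: "t2 = ps_share n m P 0 ostar"
    and t3_def: "t3 = T - t1 - t2"
  shows "t1 + t2 \<ge> 1/2 \<and> t3 < 1/6 \<and> t1 < 1/3 \<and> t2 > 2 * t3"
proof -
  interpret ps_profile n m P
    using assms(4,11) by unfold_locales auto
  have "0 < n"
    using assms(11) by simp
  have "ostar < m"
    using assms(9) prefs_complete[OF \<open>0 < n\<close>] unfolding Obar_def
    by (auto dest: in_set_takeD)
  let ?X = "ps_exh n m P ostar"
  have "1 = t2 + ps_share n m P a ostar"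
    using ps_sum_share_final_eaters[OF \<open>ostar < m\<close>] assms(12,13) t2_def by simp
  moreover have "ps_share n m P a ostar \<le> ?X"
    using ps_share_le_exh assms(11) \<open>ostar < m\<close> .
  moreover have "t1 + t2 = ?X"
    using ps_share_eq_exh_minus_start[OF \<open>0 < n\<close> \<open>ostar < m\<close> assms(10)] t1_def t2_def
    by simp
  moreover have "?X \<le> T"
    unfolding T_def Obar_def using assms(9) Obar_def by (intro Max_ge) auto
  moreover have "0 \<le> t1"
    unfolding t1_def ps_start_def using ps_time_nonneg .
  ultimately show ?thesis
    using assms(7,8) t3_def by linarith
qed

end
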